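(* Let $r\geq2$ and $\ell\geq1$ be integers and $c>0$. Let $\mathcal{H}$ be an $\ell$-partite $\ell$-uniform hypergraph with parts $V_1,\dots,V_\ell$, each of size $n$, having at least $\ell c n^\ell$ edges. Let $\varphi$ be an $r$-colouring of the edges of the complete graphs on $V_1,\dots,V_\ell$ (i.e. of all pairs inside each $V_i$). Then there exist an integer $m\geq \left(\min\{\frac c2,\frac{1}{2r\log r}\}\right)^\ell\log n$ and sets $S_i\subseteq V_i$ with $|S_i|=m$ for $i\in[\ell]$ such that $\varphi$ is constant on the pairs inside each $S_i$, and $\mathcal{H}$ covers the complete $\ell$-partite graph with parts $S_1,\dots,S_\ell$.
   Context: Edges of $\mathcal{H}$ are $\ell$-tuples $(v_1,\dots,v_\ell)$ with $v_i\in V_i$. Let $K_2(\mathcal{H})$ be the set of vertex pairs contained in some edge of $\mathcal{H}$. For a complete $\ell$-partite graph $F$ with parts of size $m$, we say $\mathcal{H}$ covers $F$ if every edge of $F$ belongs to $K_2(\mathcal{H})$ and there are $m$ pairwise disjoint edges of $\mathcal{H}$ each contained in $V(F)$. *)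

theory Defs
  imports Complex_Main
begin

text \<open>An l-partite l-uniform hypergraph with parts V 0, ..., V (l-1) (pairwise disjoint):
  its edges are tuples, represented as lists xs of length l with xs ! i \<in> V i.\<close>
definition partite_hypergraph :: "nat \<Rightarrow> (nat \<Rightarrow> 'a set) \<Rightarrow> 'a list set \<Rightarrow> bool" where
  "partite_hypergraph l V H \<longleftrightarrow>
     (\<forall>i<l. \<forall>j<l. i \<noteq> j \<longrightarrow> V i \<inter> V j = {}) \<and>
     H \<subseteq> {xs. length xs = l \<and> (\<forall>i<l. xs ! i \<in> V i)}"

definition K2 :: "'a list set \<Rightarrow> 'a set set" where
  "K2 H = {{x, y} | x y. x \<noteq> y \<and> (\<exists>e\<in>H. x \<in> set e \<and> y \<in> set e)}"

definition covers :: "'a list set \<Rightarrow> nat \<Rightarrow> (nat \<Rightarrow> 'a set) \<Rightarrow> nat \<Rightarrow> bool" where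
  "covers H l S m \<longleftrightarrow>
     (\<forall>i<l. \<forall>j<l. i \<noteq> j \<longrightarrow> (\<forall>x\<in>S i. \<forall>y\<in>S j. {x, y} \<in> K2 H)) \<and>
     (\<exists>D \<subseteq> H. card D = m \<and> (\<forall>e\<in>D. set e \<subseteq> (\<Union>i<l. S i)) \<and>
        pairwise (\<lambda>e f. set e \<inter> set f = {}) D)"

end

theory Submission
  imports Defs "HOL-Library.FuncSet"
begin

text \<open>Induction on l with the rate b = min (c/2) (1/(2 r ln r)), producing parts of size
  m \<ge> b^l ln n. For one part, the at least cn vertices that are edges contain a monochromatic
  set of size s by the multicolour Ramsey bound r^(r(s-1)). For l+1 parts, call an l-prefix heavy
  if it extends to at least cn edges; counting shows that the heavy prefixes have density at least
  l c, so induction gives a monochromatic cover of them together with a matching of m' heavy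
  prefixes. A greedy dependent-choice step selects s \<approx> b m' of these prefixes whose extension
  sets share a common set X of size (c/4)^(s+1) n; Ramsey inside X yields a monochromatic s-set T,
  and pairing the selected prefixes bijectively with T gives the new matching. The choice of b is
  exactly what makes r^(r(s-1)) \<le> (c/4)^(s+1) n.\<close>

definition pair_colouring :: "('a set \<Rightarrow> nat) \<Rightarrow> nat \<Rightarrow> 'a set \<Rightarrow> bool" where
  "pair_colouring \<phi> r X \<longleftrightarrow> (\<forall>x\<in>X. \<forall>y\<in>X. x \<noteq> y \<longrightarrow> \<phi> {x, y} < r)"

definition monochromatic :: "('a set \<Rightarrow> 'c) \<Rightarrow> 'c \<Rightarrow> 'a set \<Rightarrow> bool" where
  "monochromatic \<phi> k T \<longleftrightarrow> (\<forall>x\<in>T. \<forall>y\<in>T. x \<noteq> y \<longrightarrow> \<phi> {x, y} = k)"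

lemma monochromatic_subset: "monochromatic \<phi> k T \<Longrightarrow> U \<subseteq> T \<Longrightarrow> monochromatic \<phi> k U"
  unfolding monochromatic_def by blast

lemma pigeonhole_card_UN:
  assumes "finite I" and "card I * q < card (\<Union>i\<in>I. C i)"
  shows "\<exists>i\<in>I. q < card (C i)"
proof (rule ccontr)
  assume "\<not> ?thesis"
  then have "(\<Sum>i\<in>I. card (C i)) \<le> card I * q"
    using sum_bounded_above[of I "\<lambda>i. card (C i)" q] by (auto simp: not_less)
  then show False
    using card_UN_le[OF assms(1), of C] assms(2) by linarith
qed

lemma exists_large_colour_class:
  fixes \<phi> :: "'a set \<Rightarrow> nat"
  assumes "r \<ge> 2" and "finite X" and "v \<in> X" and "r ^ Suc S \<le> card X" and "pair_colouring \<phi> r X"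
  shows "\<exists>k<r. r ^ S \<le> card {w \<in> X - {v}. \<phi> {v, w} = k}"
proof -
  define C where "C k = {w \<in> X - {v}. \<phi> {v, w} = k}" for k
  have "X - {v} \<subseteq> (\<Union>k<r. C k)"
  proof
    fix w assume "w \<in> X - {v}"
    then have "\<phi> {v, w} < r" using assms(3,5) unfolding pair_colouring_def by auto
    with \<open>w \<in> X - {v}\<close> show "w \<in> (\<Union>k<r. C k)" unfolding C_def by blast
  qed
  then have "card (X - {v}) \<le> card (\<Union>k<r. C k)"
    using assms(2) by (intro card_mono) (auto simp: C_def)
  moreover have "r * (r ^ S - 1) < card (X - {v})"
  proof -
    have "r * (r ^ S - 1) = r ^ Suc S - r" by (simp add: right_diff_distrib')
    moreover have "r ^ Suc S \<ge> r" using assms(1) by simp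
    ultimately show ?thesis using assms(1,4) card_Diff_singleton[OF assms(3)] by linarith
  qed
  ultimately obtain k where "k < r" "r ^ S - 1 < card (C k)"
    using pigeonhole_card_UN[of "{..<r}" "r ^ S - 1" C] by auto
  then show ?thesis unfolding C_def by (intro exI[of _ k]) auto
qed

lemma sum_fun_upd_decrement:
  fixes t :: "'b \<Rightarrow> nat"
  assumes "finite K" and "k \<in> K" and "0 < t k"
  shows "Suc (\<Sum>i\<in>K. (t(k := t k - 1)) i) = (\<Sum>i\<in>K. t i)"
proof -
  have "(\<Sum>i\<in>K - {k}. (t(k := t k - 1)) i) = (\<Sum>i\<in>K - {k}. t i)" by (intro sum.cong) auto
  then show ?thesis using assms by (simp add: sum.remove[OF assms(1,2)])
qed

lemma ramsey_multicolour:
  fixes \<phi> :: "'a set \<Rightarrow> nat" and t :: "nat \<Rightarrow> nat"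
  assumes "r \<ge> 2" and "finite X" and "r ^ (\<Sum>k<r. t k) \<le> card X" and "pair_colouring \<phi> r X"
  shows "\<exists>k<r. \<exists>T\<subseteq>X. card T = Suc (t k) \<and> monochromatic \<phi> k T"
  using assms(2-4)
proof (induction "\<Sum>k<r. t k" arbitrary: t X)
  case 0
  then obtain v where "v \<in> X" by (metis card.empty equals0I not_one_le_zero power_0)
  moreover have "t 0 = 0" using "0.hyps" assms(1) by simp
  moreover have "monochromatic \<phi> 0 {v}" by (simp add: monochromatic_def)
  ultimately show ?case using assms(1) by (metis card_1_singleton_iff empty_subsetI insert_subset pos2 order_less_le_trans)
next
  case (Suc S)
  have card_X: "r ^ Suc S \<le> card X" using Suc.hyps(2) Suc.prems(2) by simp
  moreover have "1 \<le> r ^ Suc S" using assms(1) by simp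
  ultimately obtain v where v: "v \<in> X" by fastforce
  obtain k0 where k0: "k0 < r" "r ^ S \<le> card {w \<in> X - {v}. \<phi> {v, w} = k0}" (is "_ \<le> card ?C")
    using exists_large_colour_class[OF assms(1) Suc.prems(1) v card_X Suc.prems(3)] by blast
  have C_sub: "?C \<subseteq> X" by blast
  show ?case
  proof (cases "t k0 = 0")
    case True
    moreover have "monochromatic \<phi> k0 {v}" by (simp add: monochromatic_def)
    ultimately show ?thesis using v k0(1) by (metis card_1_singleton_iff empty_subsetI insert_subset)
  next
    case False
    define t' where "t' = t(k0 := t k0 - 1)"
    have "S = (\<Sum>k<r. t' k)"
      using sum_fun_upd_decrement[of "{..<r}" k0 t] Suc.hyps(2) k0(1) False unfolding t'_def by simp
    moreover have "finite ?C" using C_sub Suc.prems(1) by (rule finite_subset)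
    moreover have "pair_colouring \<phi> r ?C" using Suc.prems(3) C_sub unfolding pair_colouring_def by blast
    ultimately obtain k T where T: "k < r" "T \<subseteq> ?C" "card T = Suc (t' k)" "monochromatic \<phi> k T"
      using Suc.hyps(1)[of t' ?C] k0(2) by blast
    show ?thesis
    proof (cases "k = k0")
      case True
      have "finite T" using T(3) card.infinite by fastforce
      moreover have "v \<notin> T" using T(2) by blast
      ultimately have "card (insert v T) = Suc (t k0)" using T(3) True False unfolding t'_def by simp
      moreover have "monochromatic \<phi> k0 (insert v T)"
        using T(2,4) True unfolding monochromatic_def by (auto simp: insert_commute)
      moreover have "insert v T \<subseteq> X" using v T(2) by blast
      ultimately show ?thesis using k0(1) by blast
    next
      case False
      then have "card T = Suc (t k)" using T(3) unfolding t'_def by simp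
      then show ?thesis using T by blast
    qed
  qed
qed

corollary ramsey_pow:
  fixes \<phi> :: "'a set \<Rightarrow> nat"
  assumes "r \<ge> 2" and "finite X" and "r ^ (r * q) \<le> card X" and "pair_colouring \<phi> r X"
  shows "\<exists>T\<subseteq>X. card T = Suc q \<and> (\<exists>k. monochromatic \<phi> k T)"
  using ramsey_multicolour[OF assms(1,2) _ assms(4), of "\<lambda>_. q"] assms(3) by auto

lemma pow_le_if_ln_le:
  fixes a x :: real
  assumes "0 < a" and "0 < x" and "real k * ln a \<le> ln x"
  shows "a ^ k \<le> x"
  using assms by (simp add: ln_realpow[symmetric])

lemma ramsey_exponent_le:
  assumes "r \<ge> 2" and "0 \<le> y" and "2 * real r * ln (real r) * b \<le> 1"
    and "real s - 1 \<le> b * y" and "1 \<le> s"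
  shows "real (r * (s - 1)) * ln (real r) \<le> y / 2"
proof -
  have "0 \<le> real r * ln (real r)" using assms(1) by simp
  have "real (r * (s - 1)) * ln (real r) = (real r * ln (real r)) * (real s - 1)"
    using assms(5) by (simp add: of_nat_diff)
  also have "\<dots> \<le> (real r * ln (real r)) * (b * y)"
    using assms(4) \<open>0 \<le> real r * ln (real r)\<close> by (rule mult_left_mono)
  also have "\<dots> = (2 * real r * ln (real r) * b) * y / 2" by simp
  also have "\<dots> \<le> y / 2" using mult_right_mono[OF assms(3,2)] by simp
  finally show ?thesis .
qed

lemma ln_pos_if_mult_gt_one:
  fixes b :: real
  assumes "1 < b * ln (real n)" and "0 \<le> b"
  shows "0 < n" and "0 < ln (real n)"
proof -
  show "0 < n" using assms(1) by (cases n) auto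
  then have "0 \<le> ln (real n)" by simp
  with assms show "0 < ln (real n)"
    by (metis less_eq_real_def mult_zero_right not_one_less_zero)
qed

lemma ramsey_threshold_le_base:
  assumes "r \<ge> 2" and "0 < c" and "0 < b" and "b \<le> c / 2"
    and "2 * real r * ln (real r) * b \<le> 1"
    and "1 < b * ln (real n)" and "1 \<le> s" and "real s - 1 \<le> b * ln (real n)"
  shows "real (r ^ (r * (s - 1))) \<le> c * real n"
proof -
  define N where "N = ln (real n)"
  have "0 < n" "0 < N" using ln_pos_if_mult_gt_one assms(3,6) unfolding N_def by auto
  have "1 < c / 2 * N"
    using assms(6) mult_right_mono[OF assms(4), of N] \<open>0 < N\<close> unfolding N_def by linarith
  then have "2 / c < N" using assms(2) by (simp add: field_simps)
  moreover have "- ln c \<le> 1 / c" using ln_le_minus_one[of "1 / c"] assms(2) by (simp add: ln_div)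
  moreover have "real (r * (s - 1)) * ln (real r) \<le> N / 2"
    using ramsey_exponent_le assms(1,5,7,8) \<open>0 < N\<close> unfolding N_def by simp
  ultimately have "real (r * (s - 1)) * ln (real r) \<le> ln (c * real n)"
    using assms(2) \<open>0 < n\<close> unfolding N_def by (simp add: ln_mult)
  then show ?thesis
    using pow_le_if_ln_le[of "real r" "c * real n"] assms(1,2) \<open>0 < n\<close> by simp
qed

lemma ln_four_div_le:
  fixes c :: real
  assumes "0 < c"
  shows "ln (4 / c) \<le> 2 / c"
proof -
  have "ln (4 / c) = ln 2 + ln (2 / c)" using assms ln_mult[of 2 "2 / c"] by simp
  also have "\<dots> \<le> 1 + (2 / c - 1)" using ln_2_less_1 ln_le_minus_one[of "2 / c"] assms by simp
  finally show ?thesis by simp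
qed

lemma ramsey_threshold_le_step:
  assumes "r \<ge> 2" and "0 < c" and "c \<le> 1 / 2" and "0 < b" and "b \<le> c / 2"
    and "2 * real r * ln (real r) * b \<le> 1" and "0 < B" and "B \<le> b"
    and "1 < b * B * ln (real n)" and "1 \<le> s" and "real s - 1 \<le> b * B * ln (real n)"
  shows "real (r ^ (r * (s - 1))) \<le> (c / 4) ^ (s + 1) * real n"
proof -
  \<comment> \<open>In logarithms: r (s - 1) ln r \<le> B N / 2 and (s + 1) ln (4 / c) \<le> B N + 4 / c,
    while B \<le> 1 / 4 and 4 / c \<le> N / 2.\<close>
  define N where "N = ln (real n)"
  have "0 < n" "0 < N"
    using ln_pos_if_mult_gt_one[of "b * B"] assms(4,7,9) unfolding N_def by auto
  note ln_le = ln_four_div_le[OF assms(2)]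
  have "0 < ln (4 / c)" using assms(2,3) by simp
  have "b * ln (4 / c) \<le> c / 2 * (2 / c)"
    using assms(4,5) ln_le \<open>0 < ln (4 / c)\<close> by (intro mult_mono) auto
  then have "b * ln (4 / c) \<le> 1" using assms(2) by simp
  then have "b * B * N * ln (4 / c) \<le> B * N"
    using mult_right_mono[of "b * ln (4 / c)" 1 "B * N"] assms(7) \<open>0 < N\<close> by (simp add: ac_simps)
  then have "real (s + 1) * ln (4 / c) \<le> B * N + 4 / c"
    using assms(11) ln_le mult_right_mono[of "real s + 1" "b * B * N + 2" "ln (4 / c)"]
      \<open>0 < ln (4 / c)\<close> unfolding N_def by (simp add: algebra_simps)
  moreover have "4 / c \<le> N / 2"
  proof -
    have "b * B \<le> c / 2 * (c / 2)" using assms(4,5,7,8) by (intro mult_mono) auto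
    then have "b * B * N \<le> c / 2 * (c / 2) * N" using \<open>0 < N\<close> by (intro mult_right_mono) auto
    then have "1 < c / 2 * (c / 2) * N" using assms(9) unfolding N_def by linarith
    moreover have "c * (c * N) \<le> 1 / 2 * (c * N)" using assms(2,3) \<open>0 < N\<close> by (intro mult_right_mono) auto
    ultimately have "8 \<le> c * N" by (simp add: algebra_simps)
    then show ?thesis using assms(2) by (simp add: field_simps)
  qed
  moreover have "B * N \<le> 1 / 4 * N" using assms(3,5,8) \<open>0 < N\<close> by (intro mult_right_mono) auto
  moreover have "real (r * (s - 1)) * ln (real r) \<le> B * N / 2"
    using ramsey_exponent_le[of r "B * N" b s] assms(1,6,7,10,11) \<open>0 < N\<close> unfolding N_def
    by (simp add: ac_simps)
  ultimately have "real (r * (s - 1)) * ln (real r) \<le> N - real (s + 1) * ln (4 / c)"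
    using \<open>0 < N\<close> by linarith
  also have "\<dots> = ln ((c / 4) ^ (s + 1) * real n)"
    using assms(2) \<open>0 < n\<close> unfolding N_def by (simp add: ln_mult ln_realpow ln_div algebra_simps)
  finally have exponent_le: "real (r * (s - 1)) * ln (real r) \<le> ln ((c / 4) ^ (s + 1) * real n)" .
  show ?thesis
    using pow_le_if_ln_le[OF _ _ exponent_le] assms(1,2) \<open>0 < n\<close> by simp
qed

lemma sum_le_threshold_split:
  fixes f :: "'b \<Rightarrow> real"
  assumes "finite A" and "\<forall>x\<in>A. f x \<le> u" and "0 \<le> t"
  shows "(\<Sum>x\<in>A. f x) \<le> real (card {x\<in>A. t \<le> f x}) * u + real (card A) * t"
proof -
  have "(\<Sum>x\<in>A. f x) \<le> (\<Sum>x\<in>A. (if t \<le> f x then u else 0) + t)"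
    using assms(2,3) by (intro sum_mono) auto
  also have "\<dots> = real (card {x\<in>A. t \<le> f x}) * u + real (card A) * t"
    using sum.inter_filter[OF assms(1), of "\<lambda>_. u" "\<lambda>x. t \<le> f x"] by (simp add: sum.distrib)
  finally show ?thesis .
qed

lemma exists_ge_if_sum_ge:
  fixes f :: "'b \<Rightarrow> real"
  assumes "finite R" and "R \<noteq> {}" and "real (card R) * t \<le> (\<Sum>a\<in>R. f a)"
  shows "\<exists>a\<in>R. t \<le> f a"
  using sum_bounded_above_strict[of R f t] assms by (force simp: card_gt_0_iff)

lemma sum_card_Int_eq_sum_card_incident:
  assumes "finite R" and "finite X"
  shows "(\<Sum>a\<in>R. card (X \<inter> L a)) = (\<Sum>v\<in>X. card {a\<in>R. v \<in> L a})"
proof -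
  have "(\<Sum>a\<in>R. card (X \<inter> L a)) = (\<Sum>a\<in>R. \<Sum>v\<in>X. if v \<in> L a then 1 else 0)"
    using assms(2) by (intro sum.cong) (simp_all add: sum.If_cases Int_commute)
  also have "\<dots> = (\<Sum>v\<in>X. \<Sum>a\<in>R. if v \<in> L a then 1 else 0)" by (rule sum.swap)
  also have "\<dots> = (\<Sum>v\<in>X. card {a\<in>R. v \<in> L a})"
    using assms(1) by (intro sum.cong) (simp_all add: sum.If_cases Int_def conj_commute)
  finally show ?thesis .
qed

lemma exists_large_common_part:
  fixes \<delta> :: real
  assumes "finite R" and "R \<noteq> {}" and "finite X"
    and "\<forall>v\<in>X. \<delta> * card R \<le> card {a\<in>R. v \<in> L a}"
  shows "\<exists>a\<in>R. \<delta> * card X \<le> card (X \<inter> L a)"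
proof (rule exists_ge_if_sum_ge[OF assms(1,2)])
  have "real (card X) * (\<delta> * card R) \<le> (\<Sum>v\<in>X. real (card {a\<in>R. v \<in> L a}))"
    using sum_bounded_below[of X "\<delta> * card R"] assms(4) by simp
  also have "\<dots> = (\<Sum>a\<in>R. real (card (X \<inter> L a)))"
    unfolding of_nat_sum[symmetric] sum_card_Int_eq_sum_card_incident[OF assms(1,3)] ..
  finally show "real (card R) * (\<delta> * card X) \<le> (\<Sum>a\<in>R. real (card (X \<inter> L a)))"
    by (simp add: ac_simps)
qed

lemma many_high_degree_vertices:
  fixes c :: real
  assumes "finite I" and "I \<noteq> {}" and "finite W" and "\<forall>a\<in>I. L a \<subseteq> W"
    and "\<forall>a\<in>I. c * card W \<le> card (L a)" and "0 \<le> c"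
  shows "c / 4 * card W \<le> card {v\<in>W. 3 * c / 4 * card I \<le> card {a\<in>I. v \<in> L a}}"
    (is "_ \<le> real (card ?X0)")
proof -
  have "real (card I) * (c * card W) \<le> (\<Sum>a\<in>I. real (card (L a)))"
    using sum_bounded_below[of I "c * card W"] assms(5) by simp
  also have "\<dots> = (\<Sum>v\<in>W. real (card {a\<in>I. v \<in> L a}))"
    using sum_card_Int_eq_sum_card_incident[OF assms(1,3), of L] assms(4)
    by (simp add: Int_absorb1 flip: of_nat_sum)
  also have "\<dots> \<le> real (card ?X0) * card I + real (card W) * (3 * c / 4 * card I)"
    using assms(1,6) by (intro sum_le_threshold_split assms(3)) (auto intro: card_mono)
  finally have "c / 4 * card W * card I \<le> card ?X0 * card I" by (simp add: algebra_simps)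
  then show ?thesis using assms(1,2) by (simp add: card_gt_0_iff)
qed

lemma exists_unused_index_large_common_part:
  fixes c :: real
  assumes "finite I" and "A \<subseteq> I" and "finite X"
    and "\<forall>v\<in>X. 3 * c / 4 * card I \<le> card {a\<in>I. v \<in> L a}"
    and "card A < card I" and "real (card A) \<le> c / 2 * card I" and "0 \<le> c"
  shows "\<exists>a\<in>I - A. c / 4 * card X \<le> card (X \<inter> L a)"
proof (rule exists_large_common_part)
  have "finite A" using assms(2,1) by (rule finite_subset)
  have card_R: "card (I - A) = card I - card A" using \<open>finite A\<close> assms(2) by (rule card_Diff_subset)
  show "\<forall>v\<in>X. c / 4 * card (I - A) \<le> card {a\<in>I - A. v \<in> L a}"
  proof
    fix v assume "v \<in> X"
    have "{a\<in>I. v \<in> L a} \<subseteq> {a\<in>I - A. v \<in> L a} \<union> A" by blast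
    then have "card {a\<in>I. v \<in> L a} \<le> card ({a\<in>I - A. v \<in> L a} \<union> A)"
      using assms(1) \<open>finite A\<close> by (intro card_mono) auto
    then have "card {a\<in>I. v \<in> L a} \<le> card {a\<in>I - A. v \<in> L a} + card A"
      using card_Un_le[of "{a\<in>I - A. v \<in> L a}" A] by linarith
    moreover have "3 * c / 4 * card I \<le> card {a\<in>I. v \<in> L a}" using assms(4) \<open>v \<in> X\<close> by blast
    moreover have "c / 4 * card (I - A) \<le> c / 4 * card I" using card_R assms(7) by (simp add: mult_left_mono)
    ultimately show "c / 4 * card (I - A) \<le> card {a\<in>I - A. v \<in> L a}" using assms(6) by linarith
  qed
  have "0 < card (I - A)" using card_R assms(5) by simp
  then show "I - A \<noteq> {}" by force
qed (use assms(1,3) in simp_all)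

lemma greedy_common_link:
  fixes c :: real
  assumes "finite I" and "finite X0"
    and "\<forall>v\<in>X0. 3 * c / 4 * card I \<le> card {a\<in>I. v \<in> L a}"
    and "s \<le> card I" and "real s - 1 \<le> c / 2 * card I" and "0 \<le> c"
  shows "\<exists>A\<subseteq>I. card A = s \<and> (\<exists>X\<subseteq>X0. (\<forall>a\<in>A. X \<subseteq> L a) \<and> (c / 4) ^ s * card X0 \<le> card X)"
proof -
  have "\<exists>A\<subseteq>I. card A = j \<and> (\<exists>X\<subseteq>X0. (\<forall>a\<in>A. X \<subseteq> L a) \<and> (c / 4) ^ j * card X0 \<le> card X)"
    if "j \<le> s" for j
    using that
  proof (induction j)
    case 0
    show ?case by (intro exI[of _ "{}"] conjI exI[of _ X0]) auto
  next
    case (Suc j)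
    then obtain A X where A: "A \<subseteq> I" "card A = j"
      and X: "X \<subseteq> X0" "\<forall>a\<in>A. X \<subseteq> L a" "(c / 4) ^ j * card X0 \<le> card X"
      by auto
    have "finite X" using X(1) assms(2) by (rule finite_subset)
    moreover have "\<forall>v\<in>X. 3 * c / 4 * card I \<le> card {a\<in>I. v \<in> L a}" using assms(3) X(1) by blast
    moreover have "card A < card I" using A(2) Suc.prems assms(4) by linarith
    moreover have "real (card A) \<le> c / 2 * card I" using A(2) Suc.prems assms(5) by linarith
    ultimately obtain a where a: "a \<in> I - A" "c / 4 * card X \<le> card (X \<inter> L a)"
      using exists_unused_index_large_common_part[OF assms(1) A(1) _ _ _ _ assms(6)] by blast
    have "card (insert a A) = Suc j" using a(1) A(2) finite_subset[OF A(1) assms(1)] by simp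
    moreover have "(c / 4) ^ Suc j * card X0 \<le> card (X \<inter> L a)"
      using mult_left_mono[OF X(3), of "c / 4"] a(2) assms(6) by simp
    moreover have "insert a A \<subseteq> I" "X \<inter> L a \<subseteq> X0" "\<forall>b\<in>insert a A. X \<inter> L a \<subseteq> L b"
      using a(1) A(1) X(1,2) by auto
    ultimately show ?case by blast
  qed
  then show ?thesis by blast
qed

lemma common_link_selection:
  fixes c :: real
  assumes "finite I" and "finite W" and "\<forall>a\<in>I. L a \<subseteq> W" and "\<forall>a\<in>I. c * card W \<le> card (L a)"
    and "0 < c" and "0 < s" and "s \<le> card I" and "real s - 1 \<le> c / 2 * card I"
  shows "\<exists>A\<subseteq>I. card A = s \<and> (\<exists>X\<subseteq>W. (\<forall>a\<in>A. X \<subseteq> L a) \<and> (c / 4) ^ (s + 1) * card W \<le> card X)"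
proof -
  define X0 where "X0 = {v\<in>W. 3 * c / 4 * card I \<le> card {a\<in>I. v \<in> L a}}"
  have "I \<noteq> {}" using assms(6,7) by auto
  then have "c / 4 * card W \<le> card X0"
    unfolding X0_def using many_high_degree_vertices[OF assms(1) _ assms(2-4)] assms(5) by simp
  then have "(c / 4) ^ (s + 1) * card W \<le> (c / 4) ^ s * card X0"
    using mult_left_mono[of "c / 4 * card W" "card X0" "(c / 4) ^ s"] assms(5) by (simp add: ac_simps)
  moreover obtain A X where "A \<subseteq> I" "card A = s" "X \<subseteq> X0" "\<forall>a\<in>A. X \<subseteq> L a"
    "(c / 4) ^ s * card X0 \<le> card X"
    using greedy_common_link[of I X0 c L s] assms(1,2,5,7,8) unfolding X0_def by auto
  moreover have "X0 \<subseteq> W" unfolding X0_def by blast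
  ultimately show ?thesis by (intro exI[of _ A] conjI exI[of _ X]) auto
qed

definition tuples :: "nat \<Rightarrow> (nat \<Rightarrow> 'a set) \<Rightarrow> 'a list set" where
  "tuples k V = {xs. length xs = k \<and> (\<forall>i<k. xs ! i \<in> V i)}"

lemma partite_hypergraph_tuples:
  "partite_hypergraph l V H \<longleftrightarrow> (\<forall>i<l. \<forall>j<l. i \<noteq> j \<longrightarrow> V i \<inter> V j = {}) \<and> H \<subseteq> tuples l V"
  unfolding partite_hypergraph_def tuples_def ..

lemma append_in_tuples_iff: "xs @ [v] \<in> tuples (Suc k) V \<longleftrightarrow> xs \<in> tuples k V \<and> v \<in> V k"
  unfolding tuples_def by (auto simp: nth_append less_Suc_eq)

lemma finite_card_tuples:
  assumes "\<forall>i<k. finite (V i) \<and> card (V i) = n"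
  shows "finite (tuples k V)" and "card (tuples k V) \<le> n ^ k"
proof -
  let ?f = "\<lambda>xs. restrict ((!) xs) {..<k}"
  have inj: "inj_on ?f (tuples k V)"
  proof (rule inj_onI)
    fix xs ys assume "xs \<in> tuples k V" "ys \<in> tuples k V" and eq: "?f xs = ?f ys"
    then have len: "length xs = k" "length ys = k" unfolding tuples_def by auto
    show "xs = ys"
    proof (rule nth_equalityI)
      fix i assume "i < length xs"
      then show "xs ! i = ys ! i" using fun_cong[OF eq, of i] len by simp
    qed (simp add: len)
  qed
  have sub: "?f ` tuples k V \<subseteq> (\<Pi>\<^sub>E i\<in>{..<k}. V i)"
    unfolding tuples_def by (rule image_subsetI) (simp only: restrict_PiE_iff, auto)
  have fin: "finite (\<Pi>\<^sub>E i\<in>{..<k}. V i)" using assms by (intro finite_PiE) auto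
  show "finite (tuples k V)" using inj_on_finite[OF inj sub fin] .
  have "card (\<Pi>\<^sub>E i\<in>{..<k}. V i) = n ^ k" using assms by (simp add: card_PiE)
  then show "card (tuples k V) \<le> n ^ k" using card_inj_on_le[OF inj sub fin] by simp
qed

lemma partite_hypergraph_card_le:
  assumes "partite_hypergraph l V H" and "\<forall>i<l. finite (V i) \<and> card (V i) = n"
  shows "card H \<le> n ^ l"
proof -
  have "H \<subseteq> tuples l V" using assms(1) unfolding partite_hypergraph_tuples by simp
  then show ?thesis using card_mono finite_card_tuples[OF assms(2)] le_trans by blast
qed

definition link :: "'a list set \<Rightarrow> 'a list \<Rightarrow> 'a set" where
  "link H xs = {v. xs @ [v] \<in> H}"

definition heavy_prefixes :: "'a list set \<Rightarrow> real \<Rightarrow> 'a list set" where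
  "heavy_prefixes H t = {xs. t \<le> card (link H xs)}"

lemma append_in_partite_hypergraph:
  assumes "partite_hypergraph (Suc k) V H" and "xs @ [v] \<in> H"
  shows "xs \<in> tuples k V" and "v \<in> V k"
  using assms append_in_tuples_iff[of xs v k V] unfolding partite_hypergraph_tuples by auto

lemma link_subset_part:
  assumes "partite_hypergraph (Suc k) V H"
  shows "link H xs \<subseteq> V k"
  using append_in_partite_hypergraph(2)[OF assms] unfolding link_def by blast

lemma heavy_prefixes_subset_tuples:
  assumes "partite_hypergraph (Suc k) V H" and "0 < t"
  shows "heavy_prefixes H t \<subseteq> tuples k V"
proof
  fix xs assume "xs \<in> heavy_prefixes H t"
  then have "link H xs \<noteq> {}" using assms(2) unfolding heavy_prefixes_def by auto
  then obtain v where "xs @ [v] \<in> H" unfolding link_def by blast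
  then show "xs \<in> tuples k V" by (rule append_in_partite_hypergraph(1)[OF assms(1)])
qed

lemma partite_hypergraph_heavy_prefixes:
  assumes "partite_hypergraph (Suc k) V H" and "0 < t"
  shows "partite_hypergraph k V (heavy_prefixes H t)"
  using assms(1) heavy_prefixes_subset_tuples[OF assms] unfolding partite_hypergraph_tuples by simp

lemma K2I: "x \<noteq> y \<Longrightarrow> e \<in> H \<Longrightarrow> x \<in> set e \<Longrightarrow> y \<in> set e \<Longrightarrow> {x, y} \<in> K2 H"
  unfolding K2_def by blast

lemma K2_heavy_prefixes_subset:
  assumes "0 < t"
  shows "K2 (heavy_prefixes H t) \<subseteq> K2 H"
proof
  fix p assume "p \<in> K2 (heavy_prefixes H t)"
  then obtain x y e where p: "p = {x, y}" "x \<noteq> y" "x \<in> set e" "y \<in> set e" and "e \<in> heavy_prefixes H t"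
    unfolding K2_def by blast
  then have "link H e \<noteq> {}" using assms unfolding heavy_prefixes_def by auto
  then obtain v where "e @ [v] \<in> H" unfolding link_def by blast
  then show "p \<in> K2 H" using p K2I[of x y "e @ [v]" H] by simp
qed

lemma card_le_sum_card_link:
  assumes "partite_hypergraph (Suc k) V H" and "\<forall>i<Suc k. finite (V i) \<and> card (V i) = n"
  shows "card H \<le> (\<Sum>xs\<in>tuples k V. card (link H xs))"
proof -
  let ?P = "tuples k V"
  have "finite ?P" using finite_card_tuples(1)[of k V n] assms(2) by simp
  have link_fin: "finite (link H xs)" for xs
    using finite_subset[OF link_subset_part[OF assms(1)]] assms(2) by simp
  have "H \<subseteq> (\<Union>xs\<in>?P. (\<lambda>v. xs @ [v]) ` link H xs)"
  proof
    fix e assume "e \<in> H"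
    then have "e \<in> tuples (Suc k) V" using assms(1) unfolding partite_hypergraph_tuples by blast
    then have "e \<noteq> []" unfolding tuples_def by auto
    then have e: "e = butlast e @ [last e]" by simp
    then have "butlast e \<in> ?P" "last e \<in> link H (butlast e)"
      using \<open>e \<in> tuples (Suc k) V\<close> \<open>e \<in> H\<close> append_in_tuples_iff[of "butlast e" "last e"]
      unfolding link_def by auto
    then show "e \<in> (\<Union>xs\<in>?P. (\<lambda>v. xs @ [v]) ` link H xs)" using e by blast
  qed
  then have "card H \<le> card (\<Union>xs\<in>?P. (\<lambda>v. xs @ [v]) ` link H xs)"
    using \<open>finite ?P\<close> link_fin by (intro card_mono) auto
  also have "\<dots> \<le> (\<Sum>xs\<in>?P. card ((\<lambda>v. xs @ [v]) ` link H xs))" by (rule card_UN_le[OF \<open>finite ?P\<close>])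
  also have "\<dots> \<le> (\<Sum>xs\<in>?P. card (link H xs))" by (intro sum_mono card_image_le link_fin)
  finally show ?thesis .
qed

lemma card_le_heavy_prefixes:
  assumes "partite_hypergraph (Suc k) V H" and "\<forall>i<Suc k. finite (V i) \<and> card (V i) = n"
    and "0 < t"
  shows "real (card H) \<le> real (card (heavy_prefixes H t)) * n + real n ^ k * t"
proof -
  let ?P = "tuples k V"
  have "\<forall>i<k. finite (V i) \<and> card (V i) = n" using assms(2) by simp
  note P = finite_card_tuples[OF this]
  have link_card: "card (link H xs) \<le> n" for xs
    using card_mono[OF _ link_subset_part[OF assms(1)]] assms(2) by auto
  have "real (card H) \<le> (\<Sum>xs\<in>?P. real (card (link H xs)))"
    using card_le_sum_card_link[OF assms(1,2)] by (simp flip: of_nat_sum)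
  also have "\<dots> \<le> real (card {xs\<in>?P. t \<le> card (link H xs)}) * n + real (card ?P) * t"
    using link_card assms(3) by (intro sum_le_threshold_split P(1)) auto
  also have "\<dots> \<le> real (card (heavy_prefixes H t)) * n + real n ^ k * t"
  proof (intro add_mono mult_right_mono)
    have "heavy_prefixes H t \<subseteq> ?P" by (rule heavy_prefixes_subset_tuples[OF assms(1,3)])
    then have "finite (heavy_prefixes H t)" using P(1) by (rule finite_subset)
    then show "real (card {xs\<in>?P. t \<le> card (link H xs)}) \<le> real (card (heavy_prefixes H t))"
      unfolding heavy_prefixes_def by (intro of_nat_mono card_mono) auto
    show "real (card ?P) \<le> real n ^ k" using P(2) by (metis of_nat_le_iff of_nat_power)
  qed (use assms(3) in auto)
  finally show ?thesis .
qed

lemma card_heavy_prefixes_ge: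
  fixes c :: real
  assumes "partite_hypergraph (Suc k) V H" and "\<forall>i<Suc k. finite (V i) \<and> card (V i) = n"
    and "0 < c" and "0 < n" and "real (Suc k) * c * real n ^ Suc k \<le> card H"
  shows "real k * c * real n ^ k \<le> card (heavy_prefixes H (c * n))"
proof -
  have "real (Suc k) * c * real n ^ Suc k = real k * c * real n ^ k * n + real n ^ k * (c * n)"
    by (simp add: algebra_simps)
  moreover have "0 < c * n" using assms(3,4) by simp
  ultimately have "real k * c * real n ^ k * n \<le> real (card (heavy_prefixes H (c * n))) * n"
    using assms(5) card_le_heavy_prefixes[OF assms(1,2)] by fastforce
  then show ?thesis using assms(4) by (simp add: mult_right_le_imp_le)
qed

definition monochromatic_cover ::
    "'a list set \<Rightarrow> nat \<Rightarrow> (nat \<Rightarrow> 'a set) \<Rightarrow> ('a set \<Rightarrow> nat) \<Rightarrow> nat \<Rightarrow> (nat \<Rightarrow> 'a set) \<Rightarrow> bool" where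
  "monochromatic_cover H l V \<phi> m S \<longleftrightarrow>
     (\<forall>i<l. S i \<subseteq> V i \<and> card (S i) = m \<and> (\<exists>k. monochromatic \<phi> k (S i))) \<and> covers H l S m"

lemma monochromatic_cover_empty: "monochromatic_cover H l V \<phi> 0 (\<lambda>_. {})"
  unfolding monochromatic_cover_def covers_def monochromatic_def
  by (intro conjI exI[of _ "{}"]) auto

lemma partite_hypergraph_parts_disjoint:
  assumes "partite_hypergraph l V H" and "i < l" and "j < l" and "x \<in> V i" and "x \<in> V j"
  shows "i = j"
  using assms unfolding partite_hypergraph_def by blast

lemma monochromatic_cover_edge:
  assumes "partite_hypergraph l V H" and "e \<in> H"
  shows "monochromatic_cover H l V \<phi> 1 (\<lambda>i. {e ! i})"
proof -
  have e: "e \<in> tuples l V" using assms unfolding partite_hypergraph_tuples by blast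
  then have len: "length e = l" and part: "\<forall>i<l. e ! i \<in> V i" unfolding tuples_def by auto
  have "e ! i \<noteq> e ! j" if "i < l" "j < l" "i \<noteq> j" for i j
    using partite_hypergraph_parts_disjoint[OF assms(1) that(1,2)] part that by metis
  then have "\<forall>i<l. \<forall>j<l. i \<noteq> j \<longrightarrow> (\<forall>x\<in>{e ! i}. \<forall>y\<in>{e ! j}. {x, y} \<in> K2 H)"
    using K2I[OF _ assms(2)] len by simp
  moreover have "set e \<subseteq> (\<Union>i<l. {e ! i})" using len by (auto simp: in_set_conv_nth)
  ultimately have "covers H l (\<lambda>i. {e ! i}) 1"
    unfolding covers_def using assms(2) by (intro conjI exI[of _ "{e}"]) auto
  then show ?thesis using part unfolding monochromatic_cover_def monochromatic_def by auto
qed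

lemma monochromatic_cover_singletons:
  assumes "T \<subseteq> V 0" and "\<forall>v\<in>T. [v] \<in> H" and "monochromatic \<phi> k T"
  shows "monochromatic_cover H 1 V \<phi> (card T) (\<lambda>_. T)"
proof -
  have "card ((\<lambda>v. [v]) ` T) = card T" by (simp add: card_image inj_on_def)
  moreover have "pairwise (\<lambda>e f. set e \<inter> set f = {}) ((\<lambda>v. [v]) ` T)"
    unfolding pairwise_def by auto
  ultimately have "covers H 1 (\<lambda>_. T) (card T)"
    unfolding covers_def using assms(2) by (intro conjI exI[of _ "(\<lambda>v. [v]) ` T"]) auto
  then show ?thesis using assms(1,3) unfolding monochromatic_cover_def by auto
qed

locale cover_extension =
  fixes K :: nat and V :: "nat \<Rightarrow> 'a set" and H :: "'a list set" and \<phi> :: "'a set \<Rightarrow> nat"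
    and S' :: "nat \<Rightarrow> 'a set" and A :: "'a list set" and T :: "'a set" and s :: nat
  assumes partite: "partite_hypergraph (Suc K) V H"
    and S'_K2: "\<forall>i<K. \<forall>j<K. i \<noteq> j \<longrightarrow> (\<forall>x\<in>S' i. \<forall>y\<in>S' j. {x, y} \<in> K2 H)"
    and S'_parts: "\<forall>i<K. S' i \<subseteq> V i \<and> (\<exists>k. monochromatic \<phi> k (S' i))"
    and A_tuples: "A \<subseteq> tuples K V" and A_finite: "finite A" and A_card: "card A = s"
    and A_disjoint: "pairwise (\<lambda>a b. set a \<inter> set b = {}) A"
    and A_in_S': "\<forall>a\<in>A. set a \<subseteq> (\<Union>i<K. S' i)"
    and T_part: "T \<subseteq> V K" and T_finite: "finite T" and T_card: "card T = s"
    and T_mono: "\<exists>k. monochromatic \<phi> k T"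
    and A_T_edges: "\<forall>a\<in>A. \<forall>v\<in>T. a @ [v] \<in> H"
begin

definition S :: "nat \<Rightarrow> 'a set" where
  "S i = (if i < K then (\<lambda>a. a ! i) ` A else T)"

lemma A_length: "a \<in> A \<Longrightarrow> length a = K"
  using A_tuples unfolding tuples_def by blast

lemma A_nth_part: "a \<in> A \<Longrightarrow> i < K \<Longrightarrow> a ! i \<in> V i"
  using A_tuples unfolding tuples_def by blast

lemma A_nth_S':
  assumes "a \<in> A" and "i < K"
  shows "a ! i \<in> S' i"
proof -
  have "a ! i \<in> set a" using A_length assms by simp
  then obtain j where j: "j < K" "a ! i \<in> S' j" using A_in_S' assms(1) by blast
  then have "a ! i \<in> V j" using S'_parts by blast
  then have "i = j"
    using partite_hypergraph_parts_disjoint[OF partite _ _ A_nth_part[OF assms]] assms(2) j(1) by simp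
  then show ?thesis using j(2) by simp
qed

lemma A_set_disjoint_part:
  assumes "a \<in> A" and "v \<in> V K"
  shows "v \<notin> set a"
proof
  assume "v \<in> set a"
  then obtain i where i: "i < K" "v = a ! i" using A_length[OF assms(1)] by (auto simp: in_set_conv_nth)
  then have "i = K"
    using partite_hypergraph_parts_disjoint[OF partite _ _ A_nth_part[OF assms(1) i(1)]] assms(2) by simp
  then show False using i(1) by simp
qed

lemma inj_on_nth:
  assumes "i < K"
  shows "inj_on (\<lambda>a. a ! i) A"
proof (rule inj_onI, rule ccontr)
  fix a b assume ab: "a \<in> A" "b \<in> A" "a ! i = b ! i" "a \<noteq> b"
  then have "set a \<inter> set b = {}" using A_disjoint unfolding pairwise_def by blast
  moreover have "a ! i \<in> set a" "b ! i \<in> set b" using A_length ab(1,2) assms by simp_all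
  ultimately show False using ab(3) by auto
qed

lemma S_parts: "\<forall>i<Suc K. S i \<subseteq> V i \<and> card (S i) = s \<and> (\<exists>k. monochromatic \<phi> k (S i))"
proof (intro allI impI)
  fix i assume "i < Suc K"
  show "S i \<subseteq> V i \<and> card (S i) = s \<and> (\<exists>k. monochromatic \<phi> k (S i))"
  proof (cases "i < K")
    case True
    then have sub: "S i \<subseteq> S' i" unfolding S_def using A_nth_S' by auto
    from S'_parts True obtain k where SV: "S' i \<subseteq> V i" and mono: "monochromatic \<phi> k (S' i)" by blast
    have "S i \<subseteq> V i" using sub SV by (rule order_trans)
    moreover have "card (S i) = s" using card_image[OF inj_on_nth[OF True]] A_card True unfolding S_def by simp
    moreover have "monochromatic \<phi> k (S i)" using mono sub by (rule monochromatic_subset)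
    ultimately show ?thesis by blast
  next
    case False
    then have "i = K" "S i = T" using \<open>i < Suc K\<close> unfolding S_def by auto
    then show ?thesis using T_part T_card T_mono by simp
  qed
qed

lemma S_cross_K2: "i < K \<Longrightarrow> x \<in> S i \<Longrightarrow> y \<in> S K \<Longrightarrow> {x, y} \<in> K2 H"
proof -
  assume "i < K" "x \<in> S i" "y \<in> S K"
  then obtain a where a: "a \<in> A" "x = a ! i" and "y \<in> T" unfolding S_def by auto
  then have "x \<in> set a" "y \<in> V K" using A_length \<open>i < K\<close> T_part by auto
  moreover have "a @ [y] \<in> H" using A_T_edges a(1) \<open>y \<in> T\<close> by blast
  ultimately show ?thesis using A_set_disjoint_part[OF a(1)] K2I[of x y "a @ [y]" H] by auto
qed

lemma S_K2: "\<forall>i<Suc K. \<forall>j<Suc K. i \<noteq> j \<longrightarrow> (\<forall>x\<in>S i. \<forall>y\<in>S j. {x, y} \<in> K2 H)"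
proof (intro allI impI ballI)
  fix i j x y assume ij: "i < Suc K" "j < Suc K" "i \<noteq> j" and xy: "x \<in> S i" "y \<in> S j"
  consider "i < K" "j < K" | "i < K" "j = K" | "i = K" "j < K" using ij by linarith
  then show "{x, y} \<in> K2 H"
  proof cases
    case 1
    then have "x \<in> S' i" "y \<in> S' j" using xy A_nth_S' unfolding S_def by auto
    then show ?thesis using S'_K2 1 ij(3) by blast
  next
    case 2
    then show ?thesis using S_cross_K2 xy by blast
  next
    case 3
    then show ?thesis using S_cross_K2[of j y x] xy by (simp add: insert_commute)
  qed
qed

lemma S_matching:
  "\<exists>D\<subseteq>H. card D = s \<and> (\<forall>e\<in>D. set e \<subseteq> (\<Union>i<Suc K. S i)) \<and> pairwise (\<lambda>e f. set e \<inter> set f = {}) D"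
proof -
  obtain g where g: "bij_betw g A T" using finite_same_card_bij[OF A_finite T_finite] A_card T_card by auto
  then have gT: "g a \<in> T" if "a \<in> A" for a using that by (simp add: bij_betw_apply)
  have inj: "inj_on (\<lambda>a. a @ [g a]) A" by (rule inj_onI) simp
  define D where "D = (\<lambda>a. a @ [g a]) ` A"
  have "D \<subseteq> H" unfolding D_def using A_T_edges gT by blast
  moreover have "card D = s" unfolding D_def using card_image[OF inj] A_card by simp
  moreover have "set e \<subseteq> (\<Union>i<Suc K. S i)" if "e \<in> D" for e
  proof -
    obtain a where a: "a \<in> A" "e = a @ [g a]" using \<open>e \<in> D\<close> unfolding D_def by blast
    have "set a \<subseteq> (\<Union>i<K. S i)"
    proof
      fix z assume "z \<in> set a"
      then obtain i where "i < K" "z = a ! i" using A_length[OF a(1)] by (auto simp: in_set_conv_nth)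
      then show "z \<in> (\<Union>i<K. S i)" using a(1) unfolding S_def by auto
    qed
    moreover have "g a \<in> S K" using gT[OF a(1)] unfolding S_def by simp
    moreover have "(\<Union>i<K. S i) \<union> S K = (\<Union>i<Suc K. S i)" by (simp add: lessThan_Suc Un_commute)
    ultimately show ?thesis using a(2) by auto
  qed
  moreover have "pairwise (\<lambda>e f. set e \<inter> set f = {}) D"
    unfolding D_def pairwise_def
  proof (intro ballI impI)
    fix e f assume "e \<in> (\<lambda>a. a @ [g a]) ` A" "f \<in> (\<lambda>a. a @ [g a]) ` A" "e \<noteq> f"
    then obtain a b where ab: "a \<in> A" "b \<in> A" "a \<noteq> b" "e = a @ [g a]" "f = b @ [g b]" by blast
    have "set a \<inter> set b = {}" using A_disjoint ab(1-3) unfolding pairwise_def by blast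
    moreover have "g a \<noteq> g b" using g ab(1-3) unfolding bij_betw_def inj_on_def by blast
    moreover have "g a \<notin> set b" "g b \<notin> set a"
      using A_set_disjoint_part ab(1,2) gT T_part by blast+
    ultimately show "set e \<inter> set f = {}" using ab(4,5) by auto
  qed
  ultimately show ?thesis by blast
qed

lemma monochromatic_cover: "monochromatic_cover H (Suc K) V \<phi> s S"
  unfolding monochromatic_cover_def covers_def by (intro conjI S_parts S_K2 S_matching)

end

lemma ramsey_in_common_link:
  fixes c :: real
  assumes "r \<ge> 2" and "partite_hypergraph (Suc K) V H" and "finite (V K)" and "card (V K) = n"
    and "pair_colouring \<phi> r (V K)"
    and "finite D" and "D \<subseteq> heavy_prefixes H (c * n)" and "0 < c"
    and "0 < s" and "s \<le> card D" and "real s - 1 \<le> c / 2 * card D"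
    and "real (r ^ (r * (s - 1))) \<le> (c / 4) ^ (s + 1) * n"
  shows "\<exists>A\<subseteq>D. card A = s \<and> (\<exists>T\<subseteq>V K. finite T \<and> card T = s \<and> (\<exists>k. monochromatic \<phi> k T) \<and>
           (\<forall>a\<in>A. \<forall>v\<in>T. a @ [v] \<in> H))"
proof -
  have "\<forall>a\<in>D. link H a \<subseteq> V K" using link_subset_part[OF assms(2)] by blast
  moreover have "\<forall>a\<in>D. c * card (V K) \<le> card (link H a)"
    using assms(7) unfolding heavy_prefixes_def assms(4) by blast
  ultimately have "\<exists>A\<subseteq>D. card A = s \<and>
      (\<exists>X\<subseteq>V K. (\<forall>a\<in>A. X \<subseteq> link H a) \<and> (c / 4) ^ (s + 1) * card (V K) \<le> card X)"
    by (rule common_link_selection[OF assms(6,3) _ _ assms(8-11)])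
  then obtain A X where A: "A \<subseteq> D" "card A = s" and X: "X \<subseteq> V K" "\<forall>a\<in>A. X \<subseteq> link H a"
    and card_X: "(c / 4) ^ (s + 1) * card (V K) \<le> card X"
    by blast
  have "finite X" using X(1) assms(3) by (rule finite_subset)
  moreover have "real (r ^ (r * (s - 1))) \<le> real (card X)" using assms(12) card_X[unfolded assms(4)] by linarith
  then have "r ^ (r * (s - 1)) \<le> card X" by (rule of_nat_le_iff[THEN iffD1])
  moreover have "pair_colouring \<phi> r X" using assms(5) X(1) unfolding pair_colouring_def by blast
  ultimately have "\<exists>T\<subseteq>X. card T = Suc (s - 1) \<and> (\<exists>k. monochromatic \<phi> k T)"
    by (rule ramsey_pow[OF assms(1)])
  then obtain T where T: "T \<subseteq> X" "card T = s" "\<exists>k. monochromatic \<phi> k T"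
    using assms(9) by auto
  have "finite T" using T(1) \<open>finite X\<close> by (rule finite_subset)
  moreover have "\<forall>a\<in>A. \<forall>v\<in>T. a @ [v] \<in> H" using X(2) T(1) unfolding link_def by blast
  moreover have "T \<subseteq> V K" using T(1) X(1) by (rule order_trans)
  ultimately show ?thesis using A T(2,3) by blast
qed

lemma partite_hypergraph_density_le_one:
  fixes d :: real
  assumes "partite_hypergraph l V H" and "\<forall>i<l. finite (V i) \<and> card (V i) = n" and "0 < n"
    and "d * real n ^ l \<le> card H"
  shows "d \<le> 1"
proof -
  have "card H \<le> n ^ l" by (rule partite_hypergraph_card_le[OF assms(1,2)])
  then have "real (card H) \<le> real n ^ l" by (metis of_nat_le_iff of_nat_power)
  then have "d * real n ^ l \<le> 1 * real n ^ l" using assms(4) by linarith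
  then show ?thesis using assms(3) by (simp add: mult_right_le_imp_le)
qed

lemma nat_ceiling_bounds:
  fixes y :: real
  assumes "1 < y"
  shows "1 \<le> nat \<lceil>y\<rceil>" and "y \<le> real (nat \<lceil>y\<rceil>)" and "real (nat \<lceil>y\<rceil>) - 1 < y"
  using assms by linarith+

lemma monochromatic_cover_extend_heavy_prefixes:
  fixes c :: real
  assumes "r \<ge> 2" and "0 < c" and "0 < n"
    and H: "partite_hypergraph (Suc K) V H" and parts: "\<forall>i<Suc K. finite (V i) \<and> card (V i) = n"
    and colouring: "pair_colouring \<phi> r (V K)"
    and cover: "monochromatic_cover (heavy_prefixes H (c * n)) K V \<phi> m' S'"
    and s: "0 < s" "s \<le> m'" "real s - 1 \<le> c / 2 * m'" "real (r ^ (r * (s - 1))) \<le> (c / 4) ^ (s + 1) * n"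
  shows "\<exists>S. monochromatic_cover H (Suc K) V \<phi> s S"
proof -
  let ?H' = "heavy_prefixes H (c * n)"
  have S': "\<forall>i<K. S' i \<subseteq> V i \<and> (\<exists>k. monochromatic \<phi> k (S' i))" and "covers ?H' K S' m'"
    using cover unfolding monochromatic_cover_def by auto
  then obtain D' where S'_K2: "\<forall>i<K. \<forall>j<K. i \<noteq> j \<longrightarrow> (\<forall>x\<in>S' i. \<forall>y\<in>S' j. {x, y} \<in> K2 ?H')"
    and D': "D' \<subseteq> ?H'" "card D' = m'" "\<forall>e\<in>D'. set e \<subseteq> (\<Union>i<K. S' i)"
      "pairwise (\<lambda>e f. set e \<inter> set f = {}) D'"
    unfolding covers_def by blast
  have "0 < c * n" using assms(2,3) by simp
  have D'_tuples: "D' \<subseteq> tuples K V" using D'(1) heavy_prefixes_subset_tuples[OF H \<open>0 < c * n\<close>] by blast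
  have "finite (tuples K V)" using finite_card_tuples(1)[of K V n] parts by simp
  then have "finite D'" using D'_tuples finite_subset by blast
  moreover have "finite (V K)" "card (V K) = n" using parts by auto
  ultimately obtain A T where A: "A \<subseteq> D'" "card A = s"
    and T: "T \<subseteq> V K" "finite T" "card T = s" "\<exists>k. monochromatic \<phi> k T" "\<forall>a\<in>A. \<forall>v\<in>T. a @ [v] \<in> H"
    using ramsey_in_common_link[OF assms(1) H _ _ colouring _ D'(1) assms(2)] s unfolding D'(2) by blast
  have "\<forall>i<K. \<forall>j<K. i \<noteq> j \<longrightarrow> (\<forall>x\<in>S' i. \<forall>y\<in>S' j. {x, y} \<in> K2 H)"
    using S'_K2 K2_heavy_prefixes_subset[OF \<open>0 < c * n\<close>] by blast
  moreover have "A \<subseteq> tuples K V" using A(1) D'_tuples by (rule order_trans)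
  moreover have "finite A" using A(1) \<open>finite D'\<close> by (rule finite_subset)
  moreover have "pairwise (\<lambda>a b. set a \<inter> set b = {}) A" using D'(4) A(1) by (rule pairwise_subset)
  moreover have "\<forall>a\<in>A. set a \<subseteq> (\<Union>i<K. S' i)" using D'(3) A(1) by blast
  ultimately have "cover_extension K V H \<phi> S' A T s"
    using cover_extension.intro[OF H _ S'(1) _ _ A(2) _ _ T] by blast
  then show ?thesis using cover_extension.monochromatic_cover by blast
qed

lemma monochromatic_cover_Suc:
  fixes b c :: real
  assumes rate: "r \<ge> 2" "0 < c" "0 < b" "b \<le> c / 2" "2 * real r * ln (real r) * b \<le> 1"
    and "1 \<le> K" and H: "partite_hypergraph (Suc K) V H"
    and parts: "\<forall>i<Suc K. finite (V i) \<and> card (V i) = n"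
    and dense: "real (Suc K) * c * real n ^ Suc K \<le> card H"
    and colouring: "pair_colouring \<phi> r (V K)"
    and large: "1 < b ^ Suc K * ln (real n)"
    and IH: "partite_hypergraph K V (heavy_prefixes H (c * n)) \<Longrightarrow>
      real K * c * real n ^ K \<le> card (heavy_prefixes H (c * n)) \<Longrightarrow> 1 < b ^ K * ln (real n) \<Longrightarrow>
      \<exists>m S. b ^ K * ln (real n) \<le> m \<and> monochromatic_cover (heavy_prefixes H (c * n)) K V \<phi> m S"
  shows "\<exists>m S. b ^ Suc K * ln (real n) \<le> m \<and> monochromatic_cover H (Suc K) V \<phi> m S"
proof -
  have "0 < n" "0 < ln (real n)" using ln_pos_if_mult_gt_one[of "b ^ Suc K" n] large rate(3) by auto
  have "real (Suc K) * c \<le> 1"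
    using partite_hypergraph_density_le_one[OF H parts \<open>0 < n\<close>] dense by simp
  moreover have "2 * c \<le> real (Suc K) * c" using \<open>1 \<le> K\<close> rate(2) by (intro mult_right_mono) auto
  ultimately have "c \<le> 1 / 2" "b \<le> 1 / 4" using rate(4) by linarith+
  have "b ^ K \<le> b" "b ^ Suc K \<le> b ^ K"
    using power_decreasing[of 1 K b] power_decreasing[of K "Suc K" b] \<open>1 \<le> K\<close> rate(3) \<open>b \<le> 1 / 4\<close> by simp_all
  then have "1 < b ^ K * ln (real n)"
    using large mult_right_mono[of "b ^ Suc K" "b ^ K" "ln (real n)"] \<open>0 < ln (real n)\<close> by simp
  then obtain m' S' where m': "b ^ K * ln (real n) \<le> m'"
    and cover: "monochromatic_cover (heavy_prefixes H (c * n)) K V \<phi> m' S'"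
    using IH partite_hypergraph_heavy_prefixes[OF H] card_heavy_prefixes_ge[OF H parts rate(2) \<open>0 < n\<close> dense]
      rate(2) \<open>0 < n\<close> by force
  define s where "s = nat \<lceil>b ^ Suc K * ln (real n)\<rceil>"
  note s = nat_ceiling_bounds[OF large, folded s_def]
  have "b ^ Suc K * ln (real n) = b * (b ^ K * ln (real n))" by simp
  also have "\<dots> \<le> b * m'" using m' rate(3) by (intro mult_left_mono) auto
  finally have "b ^ Suc K * ln (real n) \<le> b * m'" .
  moreover have "b * m' \<le> c / 2 * m'" "b * m' \<le> 1 / 4 * m'"
    using rate(4) \<open>b \<le> 1 / 4\<close> by (simp_all add: mult_right_mono del: times_divide_eq_left)
  ultimately have "s \<le> m'" "real s - 1 \<le> c / 2 * m'" using s large by linarith+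
  moreover have "real (r ^ (r * (s - 1))) \<le> (c / 4) ^ (s + 1) * real n"
    using ramsey_threshold_le_step[OF rate(1,2) \<open>c \<le> 1 / 2\<close> rate(3,4,5) _ \<open>b ^ K \<le> b\<close> _ s(1)]
      large s(3) rate(3) by simp
  ultimately obtain S where "monochromatic_cover H (Suc K) V \<phi> s S"
    using monochromatic_cover_extend_heavy_prefixes[OF rate(1,2) \<open>0 < n\<close> H parts colouring cover] s(1)
    by fastforce
  then show ?thesis using s(2) by blast
qed

lemma monochromatic_cover_1:
  fixes b c :: real
  assumes rate: "r \<ge> 2" "0 < c" "0 < b" "b \<le> c / 2" "2 * real r * ln (real r) * b \<le> 1"
    and H: "partite_hypergraph 1 V H" and parts: "finite (V 0)" "card (V 0) = n"
    and dense: "c * real n \<le> card H" and colouring: "pair_colouring \<phi> r (V 0)"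
    and large: "1 < b * ln (real n)"
  shows "\<exists>m S. b * ln (real n) \<le> m \<and> monochromatic_cover H 1 V \<phi> m S"
proof -
  have H1: "partite_hypergraph (Suc 0) V H" using H by simp
  let ?X = "link H []"
  have "?X \<subseteq> V 0" using link_subset_part[OF H1] .
  then have "finite ?X" using parts(1) by (rule finite_subset)
  have "tuples 0 V = {[]}" unfolding tuples_def by auto
  then have "card H \<le> card ?X" using card_le_sum_card_link[OF H1] parts by simp
  define s where "s = nat \<lceil>b * ln (real n)\<rceil>"
  note s = nat_ceiling_bounds[OF large, folded s_def]
  have "real (r ^ (r * (s - 1))) \<le> c * real n"
    using ramsey_threshold_le_base[OF rate large s(1)] s(3) by simp
  then have "r ^ (r * (s - 1)) \<le> card ?X" using dense \<open>card H \<le> card ?X\<close> by linarith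
  moreover have "pair_colouring \<phi> r ?X" using colouring \<open>?X \<subseteq> V 0\<close> unfolding pair_colouring_def by blast
  ultimately obtain T k where T: "T \<subseteq> ?X" "card T = Suc (s - 1)" "monochromatic \<phi> k T"
    using ramsey_pow[OF rate(1) \<open>finite ?X\<close>] by blast
  have "monochromatic_cover H 1 V \<phi> (card T) (\<lambda>_. T)"
    using T(1,3) \<open>?X \<subseteq> V 0\<close> unfolding link_def by (intro monochromatic_cover_singletons) auto
  moreover have "card T = s" using T(2) s(1) by simp
  ultimately show ?thesis using s(2) by blast
qed

lemma monochromatic_cover_exists_if_large:
  fixes b c :: real
  assumes rate: "r \<ge> 2" "0 < c" "0 < b" "b \<le> c / 2" "2 * real r * ln (real r) * b \<le> 1"
    and "0 < l" and "partite_hypergraph l V H" and "\<forall>i<l. finite (V i) \<and> card (V i) = n"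
    and "real l * c * real n ^ l \<le> card H" and "\<forall>i<l. pair_colouring \<phi> r (V i)"
    and "1 < b ^ l * ln (real n)"
  shows "\<exists>m S. b ^ l * ln (real n) \<le> m \<and> monochromatic_cover H l V \<phi> m S"
  using assms(6-)
proof (induction l arbitrary: H rule: nat_induct_non_zero)
  case 1
  then have "partite_hypergraph 1 V H" "finite (V 0)" "card (V 0) = n" "c * real n \<le> card H"
    "pair_colouring \<phi> r (V 0)" "1 < b * ln (real n)"
    by simp_all
  from monochromatic_cover_1[OF rate this] show ?case by simp
next
  case (Suc K)
  show ?case
  proof (rule monochromatic_cover_Suc[OF rate _ Suc.prems(1-3)])
    show "1 \<le> K" using Suc.hyps by simp
    show "pair_colouring \<phi> r (V K)" "1 < b ^ Suc K * ln (real n)" using Suc.prems(4,5) by simp_all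
  qed (use Suc.IH Suc.prems(2,4) in simp)
qed

lemma monochromatic_cover_exists:
  fixes b c :: real
  assumes rate: "r \<ge> 2" "0 < c" "0 < b" "b \<le> c / 2" "2 * real r * ln (real r) * b \<le> 1"
    and "0 < l" and H: "partite_hypergraph l V H" and "\<forall>i<l. finite (V i) \<and> card (V i) = n"
    and dense: "real l * c * real n ^ l \<le> card H" and "\<forall>i<l. pair_colouring \<phi> r (V i)"
  shows "\<exists>m S. b ^ l * ln (real n) \<le> m \<and> monochromatic_cover H l V \<phi> m S"
proof -
  consider "b ^ l * ln (real n) \<le> 0" | "0 < b ^ l * ln (real n)" "b ^ l * ln (real n) \<le> 1"
    | "1 < b ^ l * ln (real n)" by linarith
  then show ?thesis
  proof cases
    case 1
    then show ?thesis using monochromatic_cover_empty by fastforce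
  next
    case 2
    then have "0 < n" by (cases n) auto
    then have "0 < real l * c * real n ^ l" using \<open>0 < l\<close> rate(2) by simp
    then have "0 < card H" using dense by linarith
    then obtain e where "e \<in> H" by (metis card_gt_0_iff ex_in_conv)
    then show ?thesis using monochromatic_cover_edge[OF H, of e \<phi>] 2(2) by (intro exI[of _ 1]) auto
  next
    case 3
    then show ?thesis using monochromatic_cover_exists_if_large[OF assms] by simp
  qed
qed

lemma min_rate_bounds:
  fixes c :: real
  assumes "r \<ge> 2" and "0 < c"
  defines "b \<equiv> min (c / 2) (1 / (2 * real r * ln (real r)))"
  shows "0 < b" and "b \<le> c / 2" and "2 * real r * ln (real r) * b \<le> 1"
proof -
  have q: "0 < 2 * real r * ln (real r)" using assms(1) by simp
  then show "0 < b" "b \<le> c / 2" using assms(2) unfolding b_def by auto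
  have "2 * real r * ln (real r) * b \<le> 2 * real r * ln (real r) * (1 / (2 * real r * ln (real r)))"
    using q unfolding b_def by (intro mult_left_mono) auto
  also have "\<dots> = 1" using q by (simp only: times_divide_eq_right mult_1_right divide_self)
  finally show "2 * real r * ln (real r) * b \<le> 1" .
qed

theorem lemma3p1:
  fixes r l n :: nat and c :: real
    and V :: "nat \<Rightarrow> 'a set" and H :: "'a list set" and \<phi> :: "'a set \<Rightarrow> nat"
  assumes "r \<ge> 2" and "l \<ge> 1" and "c > 0"
    and "partite_hypergraph l V H"
    and "\<forall>i<l. finite (V i) \<and> card (V i) = n"
    and "real (card H) \<ge> real l * c * real n ^ l"
    and "\<forall>i<l. \<forall>x\<in>V i. \<forall>y\<in>V i. x \<noteq> y \<longrightarrow> \<phi> {x, y} < r"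
  shows "\<exists>m::nat. \<exists>S :: nat \<Rightarrow> 'a set.
           real m \<ge> (min (c / 2) (1 / (2 * real r * ln (real r)))) ^ l * ln (real n) \<and>
           (\<forall>i<l. S i \<subseteq> V i \<and> card (S i) = m) \<and>
           (\<forall>i<l. \<exists>k. \<forall>x\<in>S i. \<forall>y\<in>S i. x \<noteq> y \<longrightarrow> \<phi> {x, y} = k) \<and>
           covers H l S m"
proof -
  have "0 < l" using assms(2) by simp
  moreover have "\<forall>i<l. pair_colouring \<phi> r (V i)" using assms(7) unfolding pair_colouring_def by blast
  ultimately obtain m S where m: "(min (c / 2) (1 / (2 * real r * ln (real r)))) ^ l * ln (real n) \<le> m"
    and cover: "monochromatic_cover H l V \<phi> m S"
    using monochromatic_cover_exists[OF assms(1,3) min_rate_bounds[OF assms(1,3)] _ assms(4-6)] by blast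
  then have "\<forall>i<l. S i \<subseteq> V i \<and> card (S i) = m" "\<forall>i<l. \<exists>k. monochromatic \<phi> k (S i)" "covers H l S m"
    unfolding monochromatic_cover_def by auto
  then show ?thesis using m unfolding monochromatic_def by (intro exI[of _ m] exI[of _ S] conjI)
qed

end
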